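(* Let $x\in\mathbb{R}_+^n$ and let $\mathrm{IC}(\mathbf{a}_0,\dots,\mathbf{a}_{n-1})$ be an interval circulant matrix containing $\hat A$. Then there exists $A\in\mathrm{IC}(\mathbf{a}_0,\dots,\mathbf{a}_{n-1})$ with $x\in\mathrm{Attr}(A)$ if and only if $x\in\mathrm{Attr}(\hat A)$.
   Context: Max algebra on $\mathbb{R}_+$: $\oplus=\max$, ordinary product; $\lambda(A)$ greatest max-algebraic eigenvalue (maximum cycle geometric mean); $\mathrm{Attr}(A)=\{x\in\mathbb{R}_+^n: A^{t+1}\otimes x=\lambda(A)A^t\otimes x\text{ for some }t\ge0\}$. $\mathrm{Circ}(a_0,\dots,a_{n-1})$ has entries $A_{i,j}=a_t$, $t\equiv j-i\pmod n$; $\mathrm{IC}(\mathbf{a}_0,\dots,\mathbf{a}_{n-1})$ is the set of all $\mathrm{Circ}(a_0,\dots,a_{n-1})$ with $a_t\in\mathbf{a}_t$, each $\mathbf{a}_t\subseteq\mathbb{R}_+$ a nonempty interval of one of the forms $[\underline{a}_t,\overline{a}_t]$, $(\underline{a}_t,\overline{a}_t)$, $(\underline{a}_t,\overline{a}_t]$, $[\underline{a}_t,\overline{a}_t)$. $\underline a=\max_k\underline a_k$, $\hat A=\mathrm{Circ}(\hat a_0,\dots,\hat a_{n-1})$, $\hat a_i=\min\{\underline a,\overline a_i\}$. *)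

theory Defs
  imports Complex_Main
begin

text \<open>Max-plus (max-times) algebra on nonnegative reals. An n x n matrix is a function
  nat => nat => real, a vector is nat => real; only indices below n are relevant.\<close>

definition mmult :: "nat \<Rightarrow> (nat \<Rightarrow> nat \<Rightarrow> real) \<Rightarrow> (nat \<Rightarrow> nat \<Rightarrow> real) \<Rightarrow> (nat \<Rightarrow> nat \<Rightarrow> real)" where
  "mmult n A B = (\<lambda>i j. Max ((\<lambda>k. A i k * B k j) ` {..<n}))"

definition mid :: "nat \<Rightarrow> nat \<Rightarrow> real" where
  "mid = (\<lambda>i j. if i = j then 1 else 0)"

fun mpow :: "nat \<Rightarrow> (nat \<Rightarrow> nat \<Rightarrow> real) \<Rightarrow> nat \<Rightarrow> (nat \<Rightarrow> nat \<Rightarrow> real)" where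
  "mpow n A 0 = mid"
| "mpow n A (Suc t) = mmult n A (mpow n A t)"

definition mvec :: "nat \<Rightarrow> (nat \<Rightarrow> nat \<Rightarrow> real) \<Rightarrow> (nat \<Rightarrow> real) \<Rightarrow> (nat \<Rightarrow> real)" where
  "mvec n A x = (\<lambda>i. Max ((\<lambda>j. A i j * x j) ` {..<n}))"

definition cycle_weight :: "(nat \<Rightarrow> nat \<Rightarrow> real) \<Rightarrow> nat list \<Rightarrow> real" where
  "cycle_weight A is = (\<Prod>j<length is. A (is ! j) (is ! ((j + 1) mod length is)))"

definition mlambda :: "nat \<Rightarrow> (nat \<Rightarrow> nat \<Rightarrow> real) \<Rightarrow> real" where
  "mlambda n A = Max {root (length is) (cycle_weight A is) | is.
      is \<noteq> [] \<and> length is \<le> n \<and> set is \<subseteq> {..<n}}"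

definition Attr :: "nat \<Rightarrow> (nat \<Rightarrow> nat \<Rightarrow> real) \<Rightarrow> (nat \<Rightarrow> real) set" where
  "Attr n A = {x. (\<forall>i<n. 0 \<le> x i) \<and>
     (\<exists>t. \<forall>i<n. mvec n (mpow n A (t + 1)) x i = mlambda n A * mvec n (mpow n A t) x i)}"

definition Circ :: "nat \<Rightarrow> (nat \<Rightarrow> real) \<Rightarrow> (nat \<Rightarrow> nat \<Rightarrow> real)" where
  "Circ n a = (\<lambda>i j. a ((j + n - i) mod n))"

definition ival :: "real \<Rightarrow> real \<Rightarrow> bool \<Rightarrow> bool \<Rightarrow> real set" where
  "ival lo hi clo chi = {x. (if clo then lo \<le> x else lo < x) \<and> (if chi then x \<le> hi else x < hi)}"

definition IC :: "nat \<Rightarrow> (nat \<Rightarrow> real set) \<Rightarrow> (nat \<Rightarrow> nat \<Rightarrow> real) set" where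
  "IC n I = {Circ n a | a. \<forall>t<n. a t \<in> I t}"

definition hat_a :: "nat \<Rightarrow> (nat \<Rightarrow> real) \<Rightarrow> (nat \<Rightarrow> real) \<Rightarrow> (nat \<Rightarrow> real)" where
  "hat_a n lo hi = (\<lambda>i. min (Max (lo ` {..<n})) (hi i))"

end

theory Submission
  imports Defs
begin

text \<open>The direction from right to left holds because \<open>\<hat>A\<close> lies in the interval circulant.
  Conversely let \<open>x \<in> Attr(Circ a)\<close>. The eigenvalue of a nonnegative circulant is its largest
  entry, attained on the cycle \<open>i \<mapsto> i + s\<close> through every node, where \<open>a\<^sub>s = max a\<close>.
  After dividing both matrices by their eigenvalues, the normalised \<open>\<hat>A\<close> dominates the
  normalised \<open>Circ a\<close> entrywise and has entries at most \<open>1\<close>. For such a matrix \<open>G\<close>, walking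
  around unit cycles shows that \<open>G\<^sup>k v\<close> does not decrease along multiples of \<open>n\<close>, and cutting
  closed subwalks of weight at most \<open>1\<close> shows that it does not increase either, so it is
  constant from \<open>n\<^sup>2\<close> on. Comparing the \<open>G\<close>-orbit of \<open>x\<close> with that of the limit \<open>y\<close> of \<open>x\<close>
  under the smaller matrix, which satisfies \<open>y \<le> G y\<close>, shows that \<open>x\<close> reaches a fixed point of
  \<open>G\<close>, i.e. \<open>x \<in> Attr(\<hat>A)\<close>.\<close>

lemma Max_image_mono:
  assumes "finite K" "K \<noteq> {}" "\<And>k. k \<in> K \<Longrightarrow> f k \<le> g k"
  shows "Max (f ` K) \<le> Max (g ` K)"
  using assms by (simp add: Max_le_iff) (meson Max_ge finite_imageI image_eqI order_trans)

lemma mvec_ge: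
  assumes "j < n"
  shows "C i j * v j \<le> mvec n C v i"
  unfolding mvec_def using assms by (intro Max_ge) auto

lemma mvec_attained:
  assumes "0 < n"
  obtains j where "j < n" "mvec n C v i = C i j * v j"
proof -
  have "mvec n C v i \<in> (\<lambda>j. C i j * v j) ` {..<n}"
    unfolding mvec_def using assms by (intro Max_in) auto
  then show ?thesis using that by auto
qed

lemma mvec_cong:
  assumes "\<And>j. j < n \<Longrightarrow> v j = w j"
  shows "mvec n C v i = mvec n C w i"
  unfolding mvec_def using assms by (intro arg_cong[where f = Max] image_cong) auto

lemma mvec_nonneg:
  assumes "0 < n" "\<And>i j. 0 \<le> C i j" "\<And>j. j < n \<Longrightarrow> 0 \<le> v j"
  shows "0 \<le> mvec n C v i"
  using assms mvec_ge[OF assms(1), of C i v] by (meson mult_nonneg_nonneg order_trans)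

lemma mvec_mono:
  assumes "0 < n" "\<And>i j. 0 \<le> C i j" "\<And>j. j < n \<Longrightarrow> v j \<le> w j"
  shows "mvec n C v i \<le> mvec n C w i"
  unfolding mvec_def using assms
  by (intro Max_image_mono) (auto intro: mult_left_mono)

lemma mvec_mono_matrix:
  assumes "0 < n" "\<And>i j. C i j \<le> D i j" "\<And>j. j < n \<Longrightarrow> 0 \<le> v j"
  shows "mvec n C v i \<le> mvec n D v i"
  unfolding mvec_def using assms
  by (intro Max_image_mono) (auto intro: mult_right_mono)

lemma funpow_mvec_nonneg:
  assumes "0 < n" "\<And>i j. 0 \<le> C i j" "\<And>j. j < n \<Longrightarrow> 0 \<le> v j" "i < n"
  shows "0 \<le> (mvec n C ^^ m) v i"
  using assms(4) by (induction m arbitrary: i) (simp_all add: assms mvec_nonneg)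

lemma funpow_mvec_mono:
  assumes "0 < n" "\<And>i j. 0 \<le> C i j" "\<And>j. j < n \<Longrightarrow> v j \<le> w j" "i < n"
  shows "(mvec n C ^^ m) v i \<le> (mvec n C ^^ m) w i"
  using assms(4) by (induction m arbitrary: i) (simp_all add: assms mvec_mono)

lemma funpow_mvec_mono_matrix:
  assumes "0 < n" "\<And>i j. 0 \<le> C i j" "\<And>i j. C i j \<le> D i j"
    and "\<And>j. j < n \<Longrightarrow> 0 \<le> v j" "i < n"
  shows "(mvec n C ^^ m) v i \<le> (mvec n D ^^ m) v i"
  using assms(5)
proof (induction m arbitrary: i)
  case (Suc m)
  have "mvec n C ((mvec n C ^^ m) v) i \<le> mvec n C ((mvec n D ^^ m) v) i"
    using Suc assms by (intro mvec_mono) auto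
  also have "\<dots> \<le> mvec n D ((mvec n D ^^ m) v) i"
    using assms by (intro mvec_mono_matrix funpow_mvec_nonneg) (auto intro: order_trans[OF _ assms(3)])
  finally show ?case by simp
qed simp

lemma mvec_mmult:
  assumes "0 < n" "\<And>i j. 0 \<le> C i j" "\<And>j. j < n \<Longrightarrow> 0 \<le> x j"
  shows "mvec n (mmult n C P) x i = mvec n C (mvec n P x) i"
proof (rule order_antisym)
  show "mvec n (mmult n C P) x i \<le> mvec n C (mvec n P x) i"
  proof -
    obtain j where j: "j < n" "mvec n (mmult n C P) x i = mmult n C P i j * x j"
      using mvec_attained[OF assms(1)] .
    obtain k where k: "k < n" "mmult n C P i j = C i k * P k j"
      using mvec_attained[OF assms(1), of C "\<lambda>k. P k j" i] by (auto simp: mmult_def mvec_def)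
    have "C i k * (P k j * x j) \<le> C i k * mvec n P x k"
      using assms(2) mvec_ge[OF j(1)] by (intro mult_left_mono) auto
    also have "\<dots> \<le> mvec n C (mvec n P x) i" using mvec_ge[OF k(1)] .
    finally show ?thesis using j k by (simp add: mult.assoc)
  qed
  show "mvec n C (mvec n P x) i \<le> mvec n (mmult n C P) x i"
  proof -
    obtain k where k: "k < n" "mvec n C (mvec n P x) i = C i k * mvec n P x k"
      using mvec_attained[OF assms(1)] .
    obtain j where j: "j < n" "mvec n P x k = P k j * x j"
      using mvec_attained[OF assms(1)] .
    have "C i k * P k j \<le> mmult n C P i j"
      using mvec_ge[OF k(1), of C i "\<lambda>k. P k j"] by (simp add: mmult_def mvec_def)
    then have "C i k * P k j * x j \<le> mmult n C P i j * x j"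
      using assms(3) j(1) by (intro mult_right_mono) auto
    also have "\<dots> \<le> mvec n (mmult n C P) x i" using mvec_ge[OF j(1)] .
    finally show ?thesis using j k by (simp add: mult.assoc)
  qed
qed

lemma mvec_mpow:
  assumes "0 < n" "\<And>i j. 0 \<le> C i j" "\<And>j. j < n \<Longrightarrow> 0 \<le> x j" "i < n"
  shows "mvec n (mpow n C m) x i = (mvec n C ^^ m) x i"
  using assms(4)
proof (induction m arbitrary: i)
  case 0
  have "mvec n mid x i = x i"
    unfolding mvec_def mid_def using assms(3) 0 by (intro Max_eqI) force+
  then show ?case by simp
next
  case (Suc m)
  have "mvec n (mpow n C (Suc m)) x i = mvec n C (mvec n (mpow n C m) x) i"
    using mvec_mmult[OF assms(1-3)] by simp
  also have "\<dots> = mvec n C ((mvec n C ^^ m) x) i" using Suc.IH by (intro mvec_cong) auto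
  finally show ?case by simp
qed

lemma funpow_mvec_divide:
  assumes "0 < n" "0 < (c::real)"
  shows "(mvec n (\<lambda>i j. C i j / c) ^^ m) v i = (mvec n C ^^ m) v i / c ^ m"
proof (induction m arbitrary: i)
  case (Suc m)
  let ?w = "(mvec n C ^^ m) v"
  have "mono (\<lambda>y::real. y / c ^ Suc m)" using assms(2) by (intro monoI divide_right_mono) auto
  then have Max_divide: "Max ((\<lambda>j. C i j * ?w j / c ^ Suc m) ` {..<n})
      = Max ((\<lambda>j. C i j * ?w j) ` {..<n}) / c ^ Suc m"
    using mono_Max_commute[of "\<lambda>y. y / c ^ Suc m" "(\<lambda>j. C i j * ?w j) ` {..<n}"]
      assms(1) by (simp add: image_image lessThan_empty_iff)
  have "(mvec n (\<lambda>i j. C i j / c) ^^ m) v = (\<lambda>j. ?w j / c ^ m)"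
    using Suc.IH by (rule ext)
  then have "(mvec n (\<lambda>i j. C i j / c) ^^ Suc m) v i
      = mvec n (\<lambda>i j. C i j / c) (\<lambda>j. ?w j / c ^ m) i"
    by simp
  also have "\<dots> = Max ((\<lambda>j. C i j * ?w j / c ^ Suc m) ` {..<n})"
    by (simp add: mvec_def field_simps)
  also have "\<dots> = (mvec n C ^^ Suc m) v i / c ^ Suc m"
    unfolding Max_divide by (simp add: mvec_def)
  finally show ?case .
qed simp

definition walk_weight :: "(nat \<Rightarrow> nat \<Rightarrow> real) \<Rightarrow> (nat \<Rightarrow> nat) \<Rightarrow> nat \<Rightarrow> real" where
  "walk_weight C p m = (\<Prod>l<m. C (p l) (p (Suc l)))"

lemma walk_weight_Suc: "walk_weight C p (Suc m) = C (p 0) (p 1) * walk_weight C (\<lambda>l. p (Suc l)) m"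
  unfolding walk_weight_def by (subst prod.lessThan_Suc_shift) simp

lemma walk_weight_le_funpow_mvec:
  assumes "0 < n" "\<And>i j. 0 \<le> C i j" "\<And>j. j < n \<Longrightarrow> 0 \<le> v j" "\<forall>l\<le>m. p l < n"
  shows "walk_weight C p m * v (p m) \<le> (mvec n C ^^ m) v (p 0)"
  using assms(4)
proof (induction m arbitrary: p)
  case 0 then show ?case by (simp add: walk_weight_def)
next
  case (Suc m)
  let ?q = "\<lambda>l. p (Suc l)"
  have IH: "walk_weight C ?q m * v (?q m) \<le> (mvec n C ^^ m) v (?q 0)"
    using Suc by (intro Suc.IH) auto
  have "walk_weight C p (Suc m) * v (p (Suc m)) = C (p 0) (p 1) * (walk_weight C ?q m * v (?q m))"
    by (simp add: walk_weight_Suc)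
  also have "\<dots> \<le> C (p 0) (p 1) * (mvec n C ^^ m) v (p 1)"
    using IH assms(2) by (intro mult_left_mono) auto
  also have "\<dots> \<le> mvec n C ((mvec n C ^^ m) v) (p 0)"
    using Suc.prems by (intro mvec_ge) auto
  finally show ?case by simp
qed

lemma funpow_mvec_attained_by_walk:
  assumes "0 < n" "i < n"
  obtains p where "p 0 = i" "\<forall>l\<le>m. p l < n" "(mvec n C ^^ m) v i = walk_weight C p m * v (p m)"
  using assms(2)
proof (induction m arbitrary: i thesis)
  case 0 then show ?case by (auto simp: walk_weight_def)
next
  case (Suc m)
  obtain k where k: "k < n" "(mvec n C ^^ Suc m) v i = C i k * (mvec n C ^^ m) v k"
    using mvec_attained[OF assms(1)] by (metis funpow.simps(2) o_apply)
  obtain q where q: "q 0 = k" "\<forall>l\<le>m. q l < n" "(mvec n C ^^ m) v k = walk_weight C q m * v (q m)"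
    using Suc.IH[OF _ k(1)] by blast
  define p where "p = (\<lambda>l. case l of 0 \<Rightarrow> i | Suc l' \<Rightarrow> q l')"
  have "\<forall>l\<le>Suc m. p l < n" using q Suc.prems by (auto simp: p_def split: nat.split)
  moreover have "(mvec n C ^^ Suc m) v i = walk_weight C p (Suc m) * v (p (Suc m))"
    using k q by (simp add: walk_weight_Suc p_def)
  ultimately show ?case by (intro Suc.prems(1)[of p]) (auto simp: p_def)
qed

lemma walk_weight_remove_closed_subwalk:
  assumes "a < b" "b \<le> m" "p a = p b" "\<forall>l\<le>m. p l < n"
    and "\<And>i j. 0 \<le> C i j" "\<And>i j. C i j \<le> 1"
  obtains q where "q 0 = p 0" "q (m - (b - a)) = p m" "\<forall>l\<le>m - (b - a). q l < n"
    "walk_weight C p m \<le> walk_weight C q (m - (b - a))"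
proof
  define d where "d = b - a"
  define q where "q = (\<lambda>l. if l \<le> a then p l else p (l + d))"
  define E where "E = (\<lambda>l. C (p l) (p (Suc l)))"
  have E01: "\<And>l. 0 \<le> E l" "\<And>l. E l \<le> 1" using assms(5,6) by (auto simp: E_def)
  have weight_p: "walk_weight C p m = prod E {0..<a} * prod E {a..<b} * prod E {b..<m}"
    unfolding walk_weight_def E_def lessThan_atLeast0 using assms(1,2)
    by (simp add: prod.atLeastLessThan_concat)
  have "walk_weight C q (m - d)
      = prod (\<lambda>l. C (q l) (q (Suc l))) {0..<a} * prod (\<lambda>l. C (q l) (q (Suc l))) {a..<m - d}"
    unfolding walk_weight_def lessThan_atLeast0 using assms(1,2) d_def
    by (simp add: prod.atLeastLessThan_concat)
  also have "prod (\<lambda>l. C (q l) (q (Suc l))) {0..<a} = prod E {0..<a}"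
    by (rule prod.cong) (auto simp: q_def E_def)
  also have "prod (\<lambda>l. C (q l) (q (Suc l))) {a..<m - d} = prod (\<lambda>l. E (l + d)) {a..<m - d}"
    using assms(1,3) d_def by (intro prod.cong) (auto simp: q_def E_def)
  also have "\<dots> = prod E {b..<m}"
    using prod.shift_bounds_nat_ivl[of E a d "m - d"] assms(1,2) d_def by simp
  finally have weight_q: "walk_weight C q (m - d) = prod E {0..<a} * prod E {b..<m}" .
  have "prod E {a..<b} \<le> 1" using E01 by (intro prod_le_1) auto
  moreover have "0 \<le> prod E {0..<a} * prod E {b..<m}"
    using E01 by (intro mult_nonneg_nonneg prod_nonneg) auto
  ultimately show "walk_weight C p m \<le> walk_weight C q (m - (b - a))"
    unfolding d_def[symmetric] weight_p weight_q by (metis mult.commute mult.left_commute mult_left_le)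
  show "q 0 = p 0" by (simp add: q_def)
  have "m - d \<le> a \<Longrightarrow> m = b" using assms(1,2) d_def by linarith
  then show "q (m - (b - a)) = p m" using assms(1-3) by (auto simp: q_def d_def)
  show "\<forall>l\<le>m - (b - a). q l < n" using assms(1,2,4) by (auto simp: q_def d_def)
qed

lemma pigeonhole_atMost:
  assumes "n \<le> M" "\<forall>l\<le>M. f l < (n::nat)"
  obtains a b where "a < b" "b \<le> M" "f a = f b"
proof -
  have "\<not> inj_on f {..M}"
  proof
    assume "inj_on f {..M}"
    then have "card {..M} \<le> card {..<n}" by (rule card_inj_on_le) (use assms in auto)
    then show False using assms by simp
  qed
  then show ?thesis using that unfolding inj_on_def by (metis atMost_iff linorder_neqE_nat)
qed

definition eventually_fixed :: "nat \<Rightarrow> (nat \<Rightarrow> nat \<Rightarrow> real) \<Rightarrow> (nat \<Rightarrow> real) \<Rightarrow> bool" where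
  "eventually_fixed n C x \<longleftrightarrow> (\<exists>t. \<forall>i<n. (mvec n C ^^ Suc t) x i = (mvec n C ^^ t) x i)"

lemma funpow_mvec_stationary:
  assumes "\<forall>i<n. (mvec n C ^^ Suc t) x i = (mvec n C ^^ t) x i" "i < n"
  shows "(mvec n C ^^ (t + k)) x i = (mvec n C ^^ t) x i"
  using assms(2)
proof (induction k arbitrary: i)
  case (Suc k)
  have "(mvec n C ^^ (t + Suc k)) x i = mvec n C ((mvec n C ^^ (t + k)) x) i" by simp
  also have "\<dots> = mvec n C ((mvec n C ^^ t) x) i" using Suc.IH by (intro mvec_cong) auto
  also have "\<dots> = (mvec n C ^^ t) x i" using assms(1) Suc.prems by simp
  finally show ?case .
qed simp

text \<open>A matrix with \<open>\<lambda> = 1\<close> whose critical cycles cover all nodes: \<open>\<sigma>\<close> follows edges of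
  weight \<open>1\<close> and returns to its start after \<open>n\<close> steps.\<close>

locale unit_cycle_cover =
  fixes n :: nat and C :: "nat \<Rightarrow> nat \<Rightarrow> real" and \<sigma> :: "nat \<Rightarrow> nat"
  assumes n_pos: "0 < n"
    and nonneg: "\<And>i j. 0 \<le> C i j" and le_one: "\<And>i j. C i j \<le> 1"
    and \<sigma>_range: "\<And>i. i < n \<Longrightarrow> \<sigma> i < n"
    and \<sigma>_weight: "\<And>i. i < n \<Longrightarrow> C i (\<sigma> i) = 1"
    and \<sigma>_period: "\<And>i. i < n \<Longrightarrow> (\<sigma> ^^ n) i = i"
begin

lemma funpow_\<sigma>_range: "i < n \<Longrightarrow> (\<sigma> ^^ l) i < n"
  by (induction l) (auto simp: \<sigma>_range)

lemma funpow_\<sigma>_multiple_period: "i < n \<Longrightarrow> (\<sigma> ^^ (n * k)) i = i"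
  by (induction k) (simp_all add: funpow_add \<sigma>_period)

lemma le_funpow_mvec_multiple_period:
  assumes "\<And>j. j < n \<Longrightarrow> 0 \<le> v j" "i < n"
  shows "v i \<le> (mvec n C ^^ (n * k)) v i"
proof -
  let ?p = "\<lambda>l. (\<sigma> ^^ l) i"
  have "walk_weight C ?p (n * k) = 1"
    unfolding walk_weight_def using assms(2)
    by (intro prod.neutral) (simp add: \<sigma>_weight funpow_\<sigma>_range)
  then show ?thesis
    using walk_weight_le_funpow_mvec[where C = C and v = v and m = "n * k" and p = ?p,
        OF n_pos nonneg assms(1)] assms(2)
    by (simp add: funpow_\<sigma>_multiple_period funpow_\<sigma>_range)
qed

lemma funpow_mvec_le_add_multiple_period:
  assumes "\<And>j. j < n \<Longrightarrow> 0 \<le> v j" "i < n"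
  shows "(mvec n C ^^ m) v i \<le> (mvec n C ^^ (m + n * k)) v i"
proof -
  have "(mvec n C ^^ m) v i \<le> (mvec n C ^^ m) ((mvec n C ^^ (n * k)) v) i"
    using assms by (intro funpow_mvec_mono le_funpow_mvec_multiple_period n_pos nonneg)
  then show ?thesis by (simp add: funpow_add)
qed

text \<open>Some walk realising the iterate revisits a node at two multiples of \<open>n\<close>; cutting out
  the closed subwalk between them cannot decrease the weight, and the removed length is
  restored by the monotonicity along multiples of \<open>n\<close>.\<close>

lemma funpow_mvec_multiple_period_antimono:
  assumes "\<And>j. j < n \<Longrightarrow> 0 \<le> v j" "i < n" "n \<le> M"
  shows "(mvec n C ^^ (n * M)) v i \<le> (mvec n C ^^ (n * (M - 1))) v i"
proof -
  obtain p where p: "p 0 = i" "\<forall>l\<le>n * M. p l < n"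
    "(mvec n C ^^ (n * M)) v i = walk_weight C p (n * M) * v (p (n * M))"
    using funpow_mvec_attained_by_walk[OF n_pos assms(2)] .
  obtain a b where ab: "a < b" "b \<le> M" "p (n * a) = p (n * b)"
    using pigeonhole_atMost[OF assms(3), of "\<lambda>l. p (n * l)"] p(2) by auto
  have cut: "n * M - (n * b - n * a) = n * (M - (b - a))"
    using ab by (metis diff_mult_distrib2)
  obtain q where q: "q 0 = i" "q (n * (M - (b - a))) = p (n * M)"
    "\<forall>l\<le>n * (M - (b - a)). q l < n"
    "walk_weight C p (n * M) \<le> walk_weight C q (n * (M - (b - a)))"
    using walk_weight_remove_closed_subwalk[of "n * a" "n * b" "n * M" p n C] ab p n_pos
      nonneg le_one unfolding cut by auto
  have "(mvec n C ^^ (n * M)) v i \<le> walk_weight C q (n * (M - (b - a))) * v (q (n * (M - (b - a))))"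
    using p q assms(1) by (simp add: mult_right_mono)
  also have "\<dots> \<le> (mvec n C ^^ (n * (M - (b - a)))) v i"
    using walk_weight_le_funpow_mvec[where C = C and v = v, OF n_pos nonneg assms(1) q(3)] q(1)
    by simp
  also have "\<dots> \<le> (mvec n C ^^ (n * (M - (b - a)) + n * (b - a - 1))) v i"
    using assms(1,2) by (rule funpow_mvec_le_add_multiple_period)
  also have "n * (M - (b - a)) + n * (b - a - 1) = n * (M - 1)"
    using ab by (simp add: diff_mult_distrib2[symmetric] add_mult_distrib2[symmetric])
  finally show ?thesis .
qed

lemma funpow_mvec_multiple_period_stable:
  assumes "\<And>j. j < n \<Longrightarrow> 0 \<le> v j" "i < n" "n \<le> M"
  shows "(mvec n C ^^ (n * M)) v i = (mvec n C ^^ (n * n)) v i"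
  using assms(3)
proof (induction M rule: dec_induct)
  case (step k)
  have "(mvec n C ^^ (n * Suc k)) v i \<le> (mvec n C ^^ (n * k)) v i"
    using funpow_mvec_multiple_period_antimono[where v = v and M = "Suc k", OF assms(1,2)] step
    by simp
  moreover have "(mvec n C ^^ (n * k)) v i \<le> (mvec n C ^^ (n * k + n * 1)) v i"
    using assms(1,2) by (rule funpow_mvec_le_add_multiple_period)
  ultimately show ?case using step by (simp add: add.commute)
qed simp

lemma subeigenvector_eventually_fixed:
  assumes "\<And>j. j < n \<Longrightarrow> 0 \<le> v j" "\<And>j. j < n \<Longrightarrow> v j \<le> mvec n C v j"
  shows "\<forall>i<n. (mvec n C ^^ Suc (n * n)) v i = (mvec n C ^^ (n * n)) v i"
proof (intro allI impI)
  fix i assume i: "i < n"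
  have le_iter: "v j \<le> (mvec n C ^^ k) v j" if "j < n" for j k
    using that
  proof (induction k arbitrary: j)
    case (Suc k)
    have "mvec n C v j \<le> mvec n C ((mvec n C ^^ k) v) j"
      using Suc by (intro mvec_mono n_pos nonneg) auto
    then show ?case using assms(2)[OF Suc.prems] by simp
  qed simp
  have increasing: "(mvec n C ^^ m) v i \<le> (mvec n C ^^ (m + k)) v i" for m k
    using funpow_mvec_mono[where C = C and v = v and w = "(mvec n C ^^ k) v" and m = m,
        OF n_pos nonneg le_iter i]
    by (simp add: funpow_add)
  have "(mvec n C ^^ (n * n)) v i \<le> (mvec n C ^^ Suc (n * n)) v i"
    using increasing[of "n * n" 1] by simp
  moreover have "(mvec n C ^^ Suc (n * n)) v i \<le> (mvec n C ^^ (n * Suc n)) v i"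
    using increasing[of "Suc (n * n)" "n - 1"] n_pos by (simp add: algebra_simps)
  ultimately show "(mvec n C ^^ Suc (n * n)) v i = (mvec n C ^^ (n * n)) v i"
    using funpow_mvec_multiple_period_stable[where v = v and M = "Suc n", OF assms(1) i] by simp
qed

end

text \<open>The \<open>F\<close>-limit \<open>y\<close> of \<open>x\<close> satisfies \<open>x \<le> y \<le> G\<^bsup>nt\<^esub> x\<close> and \<open>y \<le> G y\<close>, so the
  \<open>G\<close>-orbits of \<open>x\<close> and \<open>y\<close> agree after \<open>n\<^sup>2\<close> steps, where that of \<open>y\<close> has stabilised.\<close>

lemma eventually_fixed_dominating:
  assumes F: "unit_cycle_cover n F \<sigma>"
    and F_le_G: "\<And>i j. F i j \<le> G i j" and G_le_one: "\<And>i j. G i j \<le> 1"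
    and x: "\<And>j. j < n \<Longrightarrow> 0 \<le> x j"
    and "eventually_fixed n F x"
  shows "eventually_fixed n G x"
proof -
  interpret F: unit_cycle_cover n F \<sigma> by (fact F)
  have G_nonneg: "0 \<le> G i j" for i j using F.nonneg F_le_G by (rule order_trans)
  interpret G: unit_cycle_cover n G \<sigma>
    using F.n_pos G_nonneg G_le_one F.\<sigma>_range F.\<sigma>_period F.\<sigma>_weight F_le_G
    by unfold_locales (metis order_antisym)+
  obtain t where t: "\<forall>i<n. (mvec n F ^^ Suc t) x i = (mvec n F ^^ t) x i"
    using assms(5) unfolding eventually_fixed_def by blast
  define y where "y = (mvec n F ^^ (n * t)) x"
  have y_eq: "y i = (mvec n F ^^ t) x i" if "i < n" for i
    using funpow_mvec_stationary[OF t that, of "n * t - t"] F.n_pos unfolding y_def by simp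
  have y_nonneg: "0 \<le> y i" if "i < n" for i
    unfolding y_def using F.n_pos F.nonneg x that by (rule funpow_mvec_nonneg)
  have x_le_y: "x i \<le> y i" if "i < n" for i
    unfolding y_def using x that by (rule F.le_funpow_mvec_multiple_period)
  have y_le: "y i \<le> (mvec n G ^^ (n * t)) x i" if "i < n" for i
    unfolding y_def using F.n_pos F.nonneg F_le_G x that by (rule funpow_mvec_mono_matrix)
  have y_sub: "y i \<le> mvec n G y i" if "i < n" for i
  proof -
    have "y i = mvec n F ((mvec n F ^^ t) x) i" using t that y_eq by simp
    also have "\<dots> = mvec n F y i" using y_eq by (intro mvec_cong) auto
    also have "\<dots> \<le> mvec n G y i" using F.n_pos F_le_G y_nonneg by (rule mvec_mono_matrix)
    finally show ?thesis .
  qed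
  have orbits_meet: "(mvec n G ^^ (n * n)) x i = (mvec n G ^^ (n * n)) y i" if i: "i < n" for i
  proof (rule order_antisym)
    show "(mvec n G ^^ (n * n)) x i \<le> (mvec n G ^^ (n * n)) y i"
      using F.n_pos G_nonneg x_le_y i by (rule funpow_mvec_mono)
    have "(mvec n G ^^ (n * n)) y i \<le> (mvec n G ^^ (n * n)) ((mvec n G ^^ (n * t)) x) i"
      using F.n_pos G_nonneg y_le i by (rule funpow_mvec_mono)
    also have "\<dots> = (mvec n G ^^ (n * (n + t))) x i" by (simp add: funpow_add algebra_simps)
    also have "\<dots> = (mvec n G ^^ (n * n)) x i"
      using G.funpow_mvec_multiple_period_stable[where v = x and M = "n + t", OF x i] by simp
    finally show "(mvec n G ^^ (n * n)) y i \<le> (mvec n G ^^ (n * n)) x i" .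
  qed
  have "(mvec n G ^^ Suc (n * n)) x i = (mvec n G ^^ (n * n)) x i" if i: "i < n" for i
  proof -
    have "(mvec n G ^^ Suc (n * n)) x i = mvec n G ((mvec n G ^^ (n * n)) x) i" by simp
    also have "\<dots> = mvec n G ((mvec n G ^^ (n * n)) y) i"
      using orbits_meet by (intro mvec_cong) auto
    also have "\<dots> = (mvec n G ^^ (n * n)) y i"
      using G.subeigenvector_eventually_fixed[OF y_nonneg y_sub] i by simp
    finally show ?thesis using orbits_meet i by simp
  qed
  then show ?thesis unfolding eventually_fixed_def by blast
qed

lemma Circ_shift:
  assumes "i < n"
  shows "Circ n c i ((i + s) mod n) = c (s mod n)"
proof -
  have "((i + s) mod n + n - i) mod n = ((i + s) mod n + (n - i)) mod n" using assms by simp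
  also have "\<dots> = (i + s + (n - i)) mod n" by (simp add: mod_add_left_eq)
  also have "i + s + (n - i) = s + n" using assms by simp
  finally show ?thesis by (simp add: Circ_def)
qed

lemma Circ_entry_in_range:
  assumes "0 < n"
  obtains k where "k < n" "Circ n c i j = c k"
  by (rule that[of "(j + n - i) mod n"]) (simp_all add: Circ_def assms)

lemma mlambda_Circ:
  assumes "0 < n" "\<And>k. k < n \<Longrightarrow> 0 \<le> c k"
  shows "mlambda n (Circ n c) = Max (c ` {..<n})"
  unfolding mlambda_def
proof (rule Max_eqI)
  let ?M = "Max (c ` {..<n})"
  let ?mean = "\<lambda>ls. root (length ls) (cycle_weight (Circ n c) ls)"
  let ?S = "{?mean ls | ls. ls \<noteq> [] \<and> length ls \<le> n \<and> set ls \<subseteq> {..<n}}"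
  have "?S \<subseteq> ?mean ` {ls. set ls \<subseteq> {..<n} \<and> length ls \<le> n}" by auto
  then show "finite ?S"
    by (rule finite_subset) (intro finite_imageI finite_lists_length_le, simp)
  have entry: "0 \<le> Circ n c i j \<and> Circ n c i j \<le> ?M" for i j
  proof -
    obtain k where "k < n" "Circ n c i j = c k" by (rule Circ_entry_in_range[OF assms(1)])
    then show ?thesis using assms(2) by simp
  qed
  have M_nonneg: "0 \<le> ?M" using entry by (meson order_trans)
  show "y \<le> ?M" if y: "y \<in> ?S" for y
  proof -
    obtain ls where ls: "y = ?mean ls" "ls \<noteq> []" using y by blast
    have "cycle_weight (Circ n c) ls \<le> (\<Prod>j<length ls. ?M)"
      unfolding cycle_weight_def using entry by (intro prod_mono) auto
    then have "y \<le> root (length ls) (?M ^ length ls)"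
      using ls by (simp add: real_root_le_mono)
    also have "\<dots> = ?M" using ls M_nonneg by (simp add: real_root_power_cancel)
    finally show ?thesis .
  qed
  have "?M \<in> c ` {..<n}" using assms(1) by (intro Max_in) auto
  then obtain s where s: "s < n" "c s = ?M" by auto
  define ls where "ls = map (\<lambda>j. j * s mod n) [0..<n]"
  have len: "length ls = n" by (simp add: ls_def)
  have edge: "Circ n c (ls ! j) (ls ! ((j + 1) mod n)) = ?M" if "j < n" for j
  proof -
    have "ls ! ((j + 1) mod n) = (j + 1) mod n * s mod n" using assms(1) by (simp add: ls_def)
    also have "\<dots> = (j * s + s) mod n" by (simp add: mod_mult_left_eq add.commute)
    also have "\<dots> = (ls ! j + s) mod n" using that by (simp add: ls_def mod_add_left_eq)
    finally have "ls ! ((j + 1) mod n) = (ls ! j + s) mod n" .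
    then show ?thesis using Circ_shift[of "ls ! j" n c s] that s assms(1) by (simp add: ls_def)
  qed
  have "cycle_weight (Circ n c) ls = (\<Prod>j<n. ?M)"
    unfolding cycle_weight_def len using edge by (intro prod.cong) auto
  then have "?mean ls = ?M" using assms(1) M_nonneg len by (simp add: real_root_power_cancel)
  moreover have "ls \<noteq> [] \<and> length ls \<le> n \<and> set ls \<subseteq> {..<n}"
    using assms(1) unfolding ls_def by auto
  ultimately show "?M \<in> ?S"
    by force
qed

lemma unit_cycle_cover_Circ:
  assumes "0 < n" "s < n" "c s = 1" "\<And>k. k < n \<Longrightarrow> 0 \<le> c k \<and> c k \<le> 1"
  shows "unit_cycle_cover n (Circ n c) (\<lambda>i. (i + s) mod n)"
proof
  have stride: "((\<lambda>i. (i + s) mod n) ^^ l) i = (i + l * s) mod n" if "i < n" for i l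
    using that by (induction l) (simp_all add: mod_add_right_eq algebra_simps)
  show "((\<lambda>i. (i + s) mod n) ^^ n) i = i" if "i < n" for i
    using stride[OF that] that by simp
  show "Circ n c i ((i + s) mod n) = 1" if "i < n" for i
    using Circ_shift[OF that] assms(2,3) by simp
  show "0 \<le> Circ n c i j" "Circ n c i j \<le> 1" for i j
    by (rule Circ_entry_in_range[OF assms(1), of c i j]; use assms(4) in simp)+
qed (use assms(1) in auto)

lemma Attr_iff_eventually_fixed_normalised:
  assumes "0 < n" "\<And>i j. 0 \<le> C i j" "0 < mlambda n C"
  shows "x \<in> Attr n C \<longleftrightarrow>
    (\<forall>i<n. 0 \<le> x i) \<and> eventually_fixed n (\<lambda>i j. C i j / mlambda n C) x"
proof -
  let ?lam = "mlambda n C" and ?D = "\<lambda>i j. C i j / mlambda n C"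
  have power: "mvec n (mpow n C m) x i = ?lam ^ m * (mvec n ?D ^^ m) x i"
    if "\<forall>j<n. 0 \<le> x j" "i < n" for m i
    using mvec_mpow[where C = C and x = x, OF assms(1,2)] funpow_mvec_divide[OF assms(1,3)]
      that assms(3)
    by simp
  have step: "mvec n (mpow n C (t + 1)) x i = ?lam * mvec n (mpow n C t) x i
      \<longleftrightarrow> (mvec n ?D ^^ Suc t) x i = (mvec n ?D ^^ t) x i"
    if "\<forall>j<n. 0 \<le> x j" "i < n" for t i
  proof -
    have "mvec n (mpow n C (t + 1)) x i = ?lam * (?lam ^ t * (mvec n ?D ^^ Suc t) x i)"
      using power[OF that, of "Suc t"] by (simp del: mpow.simps funpow.simps)
    then show ?thesis using power[OF that, of t] assms(3) by (simp del: funpow.simps)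
  qed
  then show ?thesis unfolding Attr_def eventually_fixed_def mem_Collect_eq by meson
qed

lemma Attr_Circ_iff_eventually_fixed_normalised:
  assumes "0 < n" "\<And>k. k < n \<Longrightarrow> 0 \<le> c k" "0 < Max (c ` {..<n})"
  shows "x \<in> Attr n (Circ n c) \<longleftrightarrow>
    (\<forall>i<n. 0 \<le> x i) \<and> eventually_fixed n (Circ n (\<lambda>k. c k / Max (c ` {..<n}))) x"
proof -
  have "0 \<le> Circ n c i j" for i j using assms(1,2) by (simp add: Circ_def)
  moreover have "(\<lambda>i j. Circ n c i j / mlambda n (Circ n c)) = Circ n (\<lambda>k. c k / Max (c ` {..<n}))"
    using mlambda_Circ[where c = c, OF assms(1,2)] by (simp add: Circ_def)
  ultimately show ?thesis
    using Attr_iff_eventually_fixed_normalised[where C = "Circ n c"] mlambda_Circ[where c = c]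
      assms by simp
qed

lemma Attr_Circ_dominated:
  assumes n: "0 < n" and a: "\<And>k. k < n \<Longrightarrow> 0 \<le> a k" and c: "\<And>k. k < n \<Longrightarrow> 0 \<le> c k"
    and a_pos: "0 < Max (a ` {..<n})" and c_pos: "0 < Max (c ` {..<n})"
    and dominated: "\<And>k. k < n \<Longrightarrow> a k / Max (a ` {..<n}) \<le> c k / Max (c ` {..<n})"
    and x_Attr: "x \<in> Attr n (Circ n a)"
  shows "x \<in> Attr n (Circ n c)"
proof -
  let ?a = "\<lambda>k. a k / Max (a ` {..<n})" and ?c = "\<lambda>k. c k / Max (c ` {..<n})"
  have "Max (a ` {..<n}) \<in> a ` {..<n}" using n by (intro Max_in) auto
  then obtain s where s: "s < n" "?a s = 1" using a_pos by auto
  have "0 \<le> ?a k \<and> ?a k \<le> 1" if "k < n" for k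
    using a[OF that] that a_pos by simp
  then have "unit_cycle_cover n (Circ n ?a) (\<lambda>i. (i + s) mod n)"
    using n s by (intro unit_cycle_cover_Circ)
  moreover have x_nonneg: "\<forall>i<n. 0 \<le> x i" and "eventually_fixed n (Circ n ?a) x"
    using Attr_Circ_iff_eventually_fixed_normalised[OF n a a_pos] x_Attr by auto
  moreover have "Circ n ?a i j \<le> Circ n ?c i j" for i j
    using dominated n by (simp add: Circ_def)
  moreover have "Circ n ?c i j \<le> 1" for i j
    using n c_pos by (simp add: Circ_def)
  ultimately have "eventually_fixed n (Circ n ?c) x"
    using eventually_fixed_dominating[where F = "Circ n ?a" and G = "Circ n ?c"] by blast
  then show ?thesis
    using Attr_Circ_iff_eventually_fixed_normalised[OF n c c_pos] x_nonneg by auto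
qed

lemma Attr_Circ_zero:
  assumes "0 < n" "\<And>k. k < n \<Longrightarrow> c k = 0" "\<forall>i<n. 0 \<le> x i"
  shows "x \<in> Attr n (Circ n c)"
proof -
  have Max_zero: "Max ((\<lambda>_. 0::real) ` {..<n}) = 0" using assms(1) by (intro Max_const) auto
  have zero: "Circ n c = (\<lambda>_ _. 0)" using assms(1,2) by (simp add: Circ_def fun_eq_iff)
  have "c ` {..<n} = (\<lambda>_. 0) ` {..<n}" using assms(2) by (intro image_cong) simp_all
  then have "mlambda n (Circ n c) = 0" using mlambda_Circ[of n c] assms(1,2) Max_zero by simp
  moreover have "mvec n (mpow n (Circ n c) 1) x i = 0" if "i < n" for i
    using mvec_mpow[of n "Circ n c" x i 1] assms that by (simp add: zero mvec_def Max_zero)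
  ultimately show ?thesis unfolding Attr_def using assms(3) by (intro CollectI conjI exI[of _ 0]) auto
qed

lemma ival_bounds: "z \<in> ival lo hi clo chi \<Longrightarrow> lo \<le> z \<and> z \<le> hi"
  unfolding ival_def by (auto split: if_splits)

lemma Max_hat_a:
  assumes "0 < n" "\<And>t. t < n \<Longrightarrow> lo t \<le> hi t"
  shows "Max (hat_a n lo hi ` {..<n}) = Max (lo ` {..<n})"
proof (rule Max_eqI)
  have "Max (lo ` {..<n}) \<in> lo ` {..<n}" using assms(1) by (intro Max_in) auto
  then obtain t where "t < n" "lo t = Max (lo ` {..<n})" by auto
  then show "Max (lo ` {..<n}) \<in> hat_a n lo hi ` {..<n}"
    using assms(2) by (force simp: hat_a_def)
qed (auto simp: hat_a_def)

lemma normalised_le_normalised_hat_a: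
  assumes "0 < n" "\<And>t. t < n \<Longrightarrow> 0 \<le> lo t \<and> lo t \<le> a t \<and> a t \<le> hi t"
    and "0 < Max (lo ` {..<n})" "k < n"
  shows "a k / Max (a ` {..<n}) \<le> hat_a n lo hi k / Max (hat_a n lo hi ` {..<n})"
proof -
  let ?L = "Max (lo ` {..<n})" and ?lam = "Max (a ` {..<n})"
  have L_le: "?L \<le> ?lam" using assms(1,2) by (intro Max_image_mono) auto
  have "a k \<le> ?lam" using assms(4) by simp
  then have "a k * ?L \<le> ?L * ?lam" "a k * ?L \<le> hi k * ?lam"
    using assms(2)[OF assms(4)] assms(3) L_le by (auto intro: mult_mono simp: mult.commute)
  then have cross: "a k * ?L \<le> min ?L (hi k) * ?lam"
    using assms(3) L_le by (simp add: min_mult_distrib_right)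
  have lam_pos: "0 < ?lam" using assms(3) L_le by linarith
  have "a k / ?lam = a k * ?L / (?lam * ?L)" using assms(3) by simp
  also have "\<dots> \<le> min ?L (hi k) * ?lam / (?lam * ?L)"
    using cross assms(3) lam_pos by (intro divide_right_mono) auto
  also have "\<dots> = min ?L (hi k) / ?L" using lam_pos by simp
  finally have "a k / ?lam \<le> min ?L (hi k) / ?L" .
  moreover have "Max (hat_a n lo hi ` {..<n}) = ?L"
    by (rule Max_hat_a[OF assms(1)]) (use assms(2) in fastforce)
  ultimately show ?thesis by (simp add: hat_a_def)
qed

lemma Attr_Circ_imp_Attr_hat_a:
  assumes n: "0 < n" and bounds: "\<And>t. t < n \<Longrightarrow> 0 \<le> lo t \<and> lo t \<le> a t \<and> a t \<le> hi t"
    and x_Attr: "x \<in> Attr n (Circ n a)"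
  shows "x \<in> Attr n (Circ n (hat_a n lo hi))"
proof -
  let ?L = "Max (lo ` {..<n})"
  have L_nonneg: "0 \<le> ?L" using bounds[of 0] n by (intro order_trans[OF _ Max_ge]) auto
  have hat_nonneg: "0 \<le> hat_a n lo hi k" if "k < n" for k
    using L_nonneg bounds[OF that] by (simp add: hat_a_def)
  show ?thesis
  proof (cases "?L = 0")
    case True
    have "hat_a n lo hi k = 0" if "k < n" for k using True bounds[OF that] by (simp add: hat_a_def)
    moreover have "\<forall>i<n. 0 \<le> x i" using x_Attr by (simp add: Attr_def)
    ultimately show ?thesis by (intro Attr_Circ_zero[OF n])
  next
    case False
    then have L_pos: "0 < ?L" using L_nonneg by simp
    have L_le: "?L \<le> Max (a ` {..<n})" using n bounds by (intro Max_image_mono) auto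
    have "Max (hat_a n lo hi ` {..<n}) = ?L" using n by (rule Max_hat_a) (use bounds in fastforce)
    then show ?thesis
      using Attr_Circ_dominated[OF n _ hat_nonneg _ _ normalised_le_normalised_hat_a[OF n bounds L_pos]
          x_Attr] bounds L_pos L_le by force
  qed
qed

theorem corollary4:
  fixes n :: nat and lo hi :: "nat \<Rightarrow> real" and clo chi :: "nat \<Rightarrow> bool"
    and x :: "nat \<Rightarrow> real"
  assumes "n \<ge> 1"
    and "\<forall>t<n. 0 \<le> lo t"
    and "\<forall>t<n. ival (lo t) (hi t) (clo t) (chi t) \<noteq> {}"
    and "\<forall>i<n. 0 \<le> x i"
    and "Circ n (hat_a n lo hi) \<in> IC n (\<lambda>t. ival (lo t) (hi t) (clo t) (chi t))"
  shows "(\<exists>A\<in>IC n (\<lambda>t. ival (lo t) (hi t) (clo t) (chi t)). x \<in> Attr n A)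
         \<longleftrightarrow> x \<in> Attr n (Circ n (hat_a n lo hi))"
proof
  assume "x \<in> Attr n (Circ n (hat_a n lo hi))"
  with assms(5) show "\<exists>A\<in>IC n (\<lambda>t. ival (lo t) (hi t) (clo t) (chi t)). x \<in> Attr n A" by blast
next
  assume "\<exists>A\<in>IC n (\<lambda>t. ival (lo t) (hi t) (clo t) (chi t)). x \<in> Attr n A"
  then obtain a where a: "\<forall>t<n. a t \<in> ival (lo t) (hi t) (clo t) (chi t)"
    and x_Attr: "x \<in> Attr n (Circ n a)"
    unfolding IC_def by blast
  have "0 \<le> lo t \<and> lo t \<le> a t \<and> a t \<le> hi t" if "t < n" for t
    using ival_bounds[of "a t"] a assms(2) that by blast
  with assms(1) x_Attr show "x \<in> Attr n (Circ n (hat_a n lo hi))"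
    by (intro Attr_Circ_imp_Attr_hat_a[of n lo a hi]) auto
qed

end
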